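(* Let $S^*\subset(0,\infty)$ be an open set that is additive (i.e. $a,b\in S^*\Rightarrow a+b\in S^*$), and let $S=[0,\infty)\setminus S^*$ (a closed set). Then $S$ is bounded; let $L=\sup S$. For $x\in[0,L]$ define $a(x)=\sup\{y\in\partial S: y\le x\}$, $b(x)=\inf\{y\in\partial S: y\ge x\}$, $\alpha(x)=x-a(x)$ and $\beta(x)=b(x)-x$, where $\partial S$ is the boundary of $S$ in $\mathbb{R}$. Then: (a) for every $s\in S$, $\alpha(s)\in S$ and $\beta(s)\in S$; (b) if $s^*\in S^*$ and $x\in[0,L]$ are such that both $x$ and $s^*+x$ lie in $[0,L]$ and in the interior of $S$, then $\alpha(s^*+x)<\alpha(x)$ and $\beta(s^*+x)<\beta(x)$; (c) if $s^*\in S^*$ and $x\in[0,L]$ are such that both $x$ and $s^*+x$ lie in $[0,L]\cap S^*$, then $\alpha(s^*+x)>\alpha(x)$ and $\beta(s^*+x)>\beta(x)$.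
   Context: For $x\in S^*\cap[0,L]$, $(a(x),b(x))$ is the maximal interval of $S^*$ containing $x$; for $x$ in the interior of $S$, $(a(x),b(x))$ is the maximal interval of the interior of $S$ containing $x$; for $x\in\partial S$, $a(x)=b(x)=x$. The boundedness of $S$ is a known consequence of the hypotheses. *)

theory Defs
  imports "HOL-Analysis.Analysis"
begin

definition Sset :: "real set \<Rightarrow> real set" where
  "Sset Ss = {0..} - Ss"

definition aS :: "real set \<Rightarrow> real \<Rightarrow> real" where
  "aS Ss x = Sup {y \<in> frontier (Sset Ss). y \<le> x}"

definition bS :: "real set \<Rightarrow> real \<Rightarrow> real" where
  "bS Ss x = Inf {y \<in> frontier (Sset Ss). y \<ge> x}"

definition alphaS :: "real set \<Rightarrow> real \<Rightarrow> real" where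
  "alphaS Ss x = x - aS Ss x"

definition betaS :: "real set \<Rightarrow> real \<Rightarrow> real" where
  "betaS Ss x = bS Ss x - x"

end

theory Submission
  imports Defs
begin

text \<open>
  An open additive S* contains, with a ball B, all the multiples n B; these overlap once n is
  large, so S* contains a half-line and S is bounded.  The points a(x) and b(x) are consecutive
  boundary points of S, so the open interval between them lies entirely in S or entirely in S*.
  The key fact is that a boundary point c of S moved by any s* in S* is not interior to S,
  because the points of S* arbitrarily close to c stay in S* when moved by s*.
  For (a) apply it to a(s) moved by s - a(s) and by b(s) - s.  For (b) apply it to a(x) + (s* + \<delta>) and b(x) + (s* - \<delta>)
  with small \<delta>: both are non-interior points of S enclosing s* + x, so they confine a(s* + x) and
  b(s* + x) strictly.  For (c) the open interval (a(x), b(x)) lies in S*, hence so does its sum with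
  a ball around s*, and this sum is a neighbourhood of [a(x) + s*, b(x) + s*] free of points of S.
\<close>

lemma mem_iff_mem_if_segment_avoids_frontier:
  fixes A :: "real set"
  assumes "{min y z..max y z} \<inter> frontier A = {}"
  shows "y \<in> A \<longleftrightarrow> z \<in> A"
proof -
  have "y \<in> {min y z..max y z}" "z \<in> {min y z..max y z}" by auto
  then show ?thesis
    using connected_Int_frontier[OF connected_Icc, of "min y z" "max y z" A] assms by blast
qed

lemma closed_Sup_atMost:
  fixes F :: "real set"
  assumes "closed F" "c \<in> F" "c \<le> z"
  shows "Sup {y \<in> F. y \<le> z} \<in> F" "Sup {y \<in> F. y \<le> z} \<le> z"
    "\<And>y. y \<in> F \<Longrightarrow> y \<le> z \<Longrightarrow> y \<le> Sup {y \<in> F. y \<le> z}"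
proof -
  have ne: "{y \<in> F. y \<le> z} \<noteq> {}" and bdd: "bdd_above {y \<in> F. y \<le> z}"
    using assms by (auto intro: bdd_aboveI)
  have "closed {y \<in> F. y \<le> z}"
    using closed_Int[OF \<open>closed F\<close> closed_atMost[of z]] by (simp add: Int_def)
  then show "Sup {y \<in> F. y \<le> z} \<in> F" using closed_contains_Sup[OF ne bdd] by auto
  show "Sup {y \<in> F. y \<le> z} \<le> z" using ne by (intro cSup_least) auto
  show "\<And>y. y \<in> F \<Longrightarrow> y \<le> z \<Longrightarrow> y \<le> Sup {y \<in> F. y \<le> z}" using bdd by (intro cSup_upper) auto
qed

lemma closed_Inf_atLeast:
  fixes F :: "real set"
  assumes "closed F" "c \<in> F" "z \<le> c"
  shows "Inf {y \<in> F. y \<ge> z} \<in> F" "z \<le> Inf {y \<in> F. y \<ge> z}"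
    "\<And>y. y \<in> F \<Longrightarrow> z \<le> y \<Longrightarrow> Inf {y \<in> F. y \<ge> z} \<le> y"
proof -
  have ne: "{y \<in> F. y \<ge> z} \<noteq> {}" and bdd: "bdd_below {y \<in> F. y \<ge> z}"
    using assms by (auto intro: bdd_belowI)
  have "closed {y \<in> F. y \<ge> z}"
    using closed_Int[OF \<open>closed F\<close> closed_atLeast[of z]] by (simp add: Int_def)
  then show "Inf {y \<in> F. y \<ge> z} \<in> F" using closed_contains_Inf[OF ne bdd] by auto
  show "z \<le> Inf {y \<in> F. y \<ge> z}" using ne by (intro cInf_greatest) auto
  show "\<And>y. y \<in> F \<Longrightarrow> z \<le> y \<Longrightarrow> Inf {y \<in> F. y \<ge> z} \<le> y" using bdd by (intro cInf_lower) auto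
qed

locale additive_open_set =
  fixes Ss :: "real set"
  assumes open_Ss: "open Ss"
    and Ss_pos: "Ss \<subseteq> {0<..}"
    and Ss_add: "\<And>u v. u \<in> Ss \<Longrightarrow> v \<in> Ss \<Longrightarrow> u + v \<in> Ss"
    and Ss_nonempty: "Ss \<noteq> {}"
begin

abbreviation S :: "real set" where "S \<equiv> Sset Ss"
abbreviation L :: real where "L \<equiv> Sup (Sset Ss)"

lemma mem_S: "x \<in> S \<longleftrightarrow> 0 \<le> x \<and> x \<notin> Ss"
  by (auto simp: Sset_def)

lemma closed_S: "closed S"
  unfolding Sset_def by (intro closed_Diff closed_atLeast open_Ss)

lemma zero_in_S: "0 \<in> S"
  using Ss_pos by (auto simp: mem_S)

lemma of_nat_mult_mem_Ss: "1 \<le> n \<Longrightarrow> v \<in> Ss \<Longrightarrow> real n * v \<in> Ss"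
proof (induction n rule: nat_induct_at_least)
  case (Suc n)
  then show ?case using Ss_add[of "real n * v" v] by (simp add: algebra_simps)
qed simp

lemma mem_Ss_if_large:
  assumes "e > 0" "ball c e \<subseteq> Ss" "c * (c / e + 2) < z"
  shows "z \<in> Ss"
proof -
  have "c > 0" using assms(1,2) Ss_pos by (metis centre_in_ball greaterThan_iff subsetD)
  then have "z / c > c / e + 2" using assms(3) by (simp add: field_simps)
  moreover have ce: "c / e > 0" using \<open>c > 0\<close> \<open>e > 0\<close> by simp
  ultimately have "z / c > 2" by linarith
  define n where "n = nat \<lfloor>z / c\<rfloor>"
  have "real n = of_int \<lfloor>z / c\<rfloor>" unfolding n_def using \<open>z / c > 2\<close> by (intro of_nat_nat) simp
  then have n: "real n > c / e + 1" "real n \<le> z / c" "z / c < real n + 1"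
    using \<open>z / c > c / e + 2\<close> by linarith+
  then have "real n > 0" "1 \<le> n" using ce by linarith+
  \<comment> \<open>z = n w with w within c/n < e of c\<close>
  define w where "w = z / real n"
  have "c \<le> w" "w < c + c / real n"
    using n \<open>c > 0\<close> \<open>real n > 0\<close> unfolding w_def by (simp_all add: field_simps)
  moreover have "c / real n < e" using n(1) ce \<open>real n > 0\<close> \<open>e > 0\<close> by (simp add: field_simps)
  ultimately have "w \<in> Ss" using assms(2) by (auto simp: dist_real_def)
  with \<open>1 \<le> n\<close> have "real n * w \<in> Ss" by (rule of_nat_mult_mem_Ss)
  then show ?thesis using \<open>real n > 0\<close> unfolding w_def by simp
qed

lemma S_subset_Icc: "\<exists>T. S \<subseteq> {0..T}"
proof -
  obtain c where "c \<in> Ss" using Ss_nonempty by auto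
  then obtain e where "e > 0" "ball c e \<subseteq> Ss" using open_Ss open_contains_ball by blast
  then have "S \<subseteq> {0..c * (c / e + 2)}"
    using mem_Ss_if_large by (force simp: mem_S)
  then show ?thesis ..
qed

lemma bounded_S: "bounded S"
  using S_subset_Icc bounded_subset[OF bounded_closed_interval] by blast

lemma bdd_above_S: "bdd_above S"
  using S_subset_Icc bdd_above_Icc bdd_above_mono by metis

lemma le_L: "x \<in> S \<Longrightarrow> x \<le> L"
  using cSup_upper bdd_above_S by blast

lemma L_in_S: "L \<in> S"
  using closed_contains_Sup[OF _ bdd_above_S closed_S] zero_in_S by blast

lemma frontier_subset_S: "frontier S \<subseteq> S"
  using frontier_subset_closed closed_S by blast

lemma interior_iff_mem_S: "x \<notin> frontier S \<Longrightarrow> x \<in> interior S \<longleftrightarrow> x \<in> S"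
  using closed_S interior_subset unfolding frontier_def by (auto simp: closure_closed)

lemma L_in_frontier: "L \<in> frontier S"
  unfolding frontier_straddle
proof (intro allI impI conjI)
  fix \<epsilon> :: real assume "\<epsilon> > 0"
  show "\<exists>x\<in>S. dist L x < \<epsilon>" using L_in_S \<open>\<epsilon> > 0\<close> by force
  have "L + \<epsilon> / 2 \<notin> S" using le_L \<open>\<epsilon> > 0\<close> by force
  then show "\<exists>x. x \<notin> S \<and> dist L x < \<epsilon>"
    using \<open>\<epsilon> > 0\<close> by (intro exI[of _ "L + \<epsilon> / 2"]) (auto simp: dist_real_def)
qed

lemma zero_in_frontier: "0 \<in> frontier S"
  unfolding frontier_straddle
proof (intro allI impI conjI)
  fix \<epsilon> :: real assume "\<epsilon> > 0"
  show "\<exists>x\<in>S. dist 0 x < \<epsilon>" using zero_in_S \<open>\<epsilon> > 0\<close> by force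
  have "- \<epsilon> / 2 \<notin> S" using \<open>\<epsilon> > 0\<close> by (force simp: mem_S)
  then show "\<exists>x. x \<notin> S \<and> dist 0 x < \<epsilon>"
    using \<open>\<epsilon> > 0\<close> by (intro exI[of _ "- \<epsilon> / 2"]) (auto simp: dist_real_def)
qed

lemma aS_props:
  assumes "0 \<le> z"
  shows "aS Ss z \<in> frontier S" "aS Ss z \<le> z"
    "\<And>y. y \<in> frontier S \<Longrightarrow> y \<le> z \<Longrightarrow> y \<le> aS Ss z" "0 \<le> aS Ss z"
  using closed_Sup_atMost[OF frontier_closed zero_in_frontier assms] zero_in_frontier assms
  unfolding aS_def by auto

lemma bS_props:
  assumes "z \<le> L"
  shows "bS Ss z \<in> frontier S" "z \<le> bS Ss z"
    "\<And>y. y \<in> frontier S \<Longrightarrow> z \<le> y \<Longrightarrow> bS Ss z \<le> y" "bS Ss z \<le> L"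
  using closed_Inf_atLeast[OF frontier_closed L_in_frontier assms] L_in_frontier assms
  unfolding bS_def by auto

lemma aS_bS_frontier:
  "0 \<le> z \<Longrightarrow> z \<le> L \<Longrightarrow> z \<in> frontier S \<Longrightarrow> aS Ss z = z \<and> bS Ss z = z"
  using aS_props[of z] bS_props[of z] by (meson antisym order_refl)

lemma aS_bS_not_frontier:
  "0 \<le> z \<Longrightarrow> z \<le> L \<Longrightarrow> z \<notin> frontier S \<Longrightarrow> aS Ss z < z \<and> z < bS Ss z"
  using aS_props[of z] bS_props[of z] by (metis order_less_le)

lemma not_frontier_between_aS_bS:
  "0 \<le> z \<Longrightarrow> z \<le> L \<Longrightarrow> aS Ss z < w \<Longrightarrow> w < bS Ss z \<Longrightarrow> w \<notin> frontier S"
  using aS_props[of z] bS_props[of z] by (meson le_cases not_le)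

lemma mem_S_iff_between_aS_bS:
  assumes z: "0 \<le> z" "z \<le> L" and y: "aS Ss z < y" "y < bS Ss z"
  shows "y \<in> S \<longleftrightarrow> z \<in> S" "y \<in> interior S \<longleftrightarrow> z \<in> interior S"
proof -
  have "z \<notin> frontier S" using aS_bS_frontier[OF z] y by auto
  then have "aS Ss z < z" "z < bS Ss z" using aS_bS_not_frontier[OF z] by auto
  then have "{min y z..max y z} \<inter> frontier S = {}"
    using y not_frontier_between_aS_bS[OF z] by (force simp: min_def max_def)
  then show S_iff: "y \<in> S \<longleftrightarrow> z \<in> S" by (rule mem_iff_mem_if_segment_avoids_frontier)
  show "y \<in> interior S \<longleftrightarrow> z \<in> interior S"
    using interior_iff_mem_S S_iff \<open>z \<notin> frontier S\<close> not_frontier_between_aS_bS[OF z y] by blast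
qed

lemma frontier_plus_not_interior:
  assumes "c \<in> frontier S" "v \<in> Ss"
  shows "c + v \<notin> interior S"
proof
  assume ci: "c + v \<in> interior S"
  have "c \<ge> 0" using assms frontier_subset_S by (auto simp: mem_S)
  show False
  proof (cases "c = 0")
    case True
    then show False using ci interior_subset[of S] assms(2) by (auto simp: mem_S)
  next
    case False
    with \<open>c \<ge> 0\<close> have "c > 0" by simp
    obtain e where e: "e > 0" "ball (c + v) e \<subseteq> S"
      using ci open_interior open_contains_ball by (metis interior_subset subset_trans)
    obtain u where u: "u \<notin> S" "dist c u < min e c"
      using assms(1) e \<open>c > 0\<close> unfolding frontier_straddle by (meson min_less_iff_conj)
    then have "u \<in> Ss" by (auto simp: mem_S dist_real_def)
    then have "u + v \<in> Ss" using Ss_add assms(2) by blast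
    moreover have "u + v \<in> ball (c + v) e" using u(2) by (simp add: dist_real_def)
    then have "u + v \<in> S" using e(2) by blast
    ultimately show False by (simp add: mem_S)
  qed
qed

lemma alphaS_betaS_mem_S:
  assumes s: "s \<in> S"
  shows "alphaS Ss s \<in> S \<and> betaS Ss s \<in> S"
proof (cases "s \<in> frontier S")
  case True
  then show ?thesis
    using aS_bS_frontier[of s] s le_L zero_in_S unfolding alphaS_def betaS_def by (simp add: mem_S)
next
  case False
  have s0: "0 \<le> s" "s \<le> L" using s le_L by (auto simp: mem_S)
  have si: "s \<in> interior S" using interior_iff_mem_S[OF False] s by simp
  have ab: "aS Ss s < s" "s < bS Ss s" using aS_bS_not_frontier[OF s0 False] by auto
  have aF: "aS Ss s \<in> frontier S" using aS_props[OF s0(1)] by auto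
  have "s - aS Ss s \<notin> Ss"
    using frontier_plus_not_interior[OF aF, of "s - aS Ss s"] si by auto
  moreover have "bS Ss s - s \<notin> Ss"
  proof
    assume t: "bS Ss s - s \<in> Ss"
    have "aS Ss s + (bS Ss s - s) \<notin> interior S" using frontier_plus_not_interior[OF aF t] .
    moreover have "aS Ss s < aS Ss s + (bS Ss s - s)" "aS Ss s + (bS Ss s - s) < bS Ss s"
      using ab by auto
    ultimately show False using mem_S_iff_between_aS_bS(2)[OF s0] si by blast
  qed
  ultimately show ?thesis using ab unfolding alphaS_def betaS_def by (simp add: mem_S)
qed

lemma alphaS_betaS_decrease:
  assumes s': "s' \<in> Ss" and x: "0 \<le> x" "x \<le> L" "x \<in> interior S"
    and z: "0 \<le> s' + x" "s' + x \<le> L" "s' + x \<in> interior S"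
  shows "alphaS Ss (s' + x) < alphaS Ss x \<and> betaS Ss (s' + x) < betaS Ss x"
proof -
  obtain \<epsilon> where e: "\<epsilon> > 0" "ball s' \<epsilon> \<subseteq> Ss" using s' open_Ss open_contains_ball by blast
  have abx: "aS Ss x < x" "x < bS Ss x"
    using aS_bS_not_frontier[OF x(1,2)] x(3) by (auto simp: frontier_def)
  have abz: "aS Ss (s' + x) < s' + x" "s' + x < bS Ss (s' + x)"
    using aS_bS_not_frontier[OF z(1,2)] z(3) by (auto simp: frontier_def)
  define \<delta> where "\<delta> = min (\<epsilon> / 2) (min ((x - aS Ss x) / 2) ((bS Ss x - x) / 2))"
  have d: "\<delta> > 0" "\<delta> < \<epsilon>" "\<delta> < x - aS Ss x" "\<delta> < bS Ss x - x"
    using e abx unfolding \<delta>_def by (auto simp: min_def)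
  have "s' + \<delta> \<in> Ss" "s' - \<delta> \<in> Ss" using e d by (auto simp: dist_real_def)
  then have p: "aS Ss x + (s' + \<delta>) \<notin> interior S" and q: "bS Ss x + (s' - \<delta>) \<notin> interior S"
    using frontier_plus_not_interior aS_props(1)[OF x(1)] bS_props(1)[OF x(2)] by blast+
  have "aS Ss x + (s' + \<delta>) \<le> aS Ss (s' + x)"
  proof (rule ccontr)
    assume "\<not> ?thesis"
    moreover have "aS Ss x + (s' + \<delta>) < bS Ss (s' + x)" using d abz by linarith
    ultimately show False using mem_S_iff_between_aS_bS(2)[OF z(1,2)] z(3) p by auto
  qed
  moreover have "bS Ss (s' + x) \<le> bS Ss x + (s' - \<delta>)"
  proof (rule ccontr)
    assume "\<not> ?thesis"
    moreover have "aS Ss (s' + x) < bS Ss x + (s' - \<delta>)" using d abz by linarith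
    ultimately show False using mem_S_iff_between_aS_bS(2)[OF z(1,2)] z(3) q by auto
  qed
  ultimately show ?thesis using d unfolding alphaS_def betaS_def by linarith
qed

lemma alphaS_betaS_increase:
  assumes s': "s' \<in> Ss" and x: "0 \<le> x" "x \<le> L" "x \<in> Ss"
    and z: "0 \<le> s' + x" "s' + x \<le> L"
  shows "alphaS Ss (s' + x) > alphaS Ss x \<and> betaS Ss (s' + x) > betaS Ss x"
proof -
  obtain \<epsilon> where e: "\<epsilon> > 0" "ball s' \<epsilon> \<subseteq> Ss" using s' open_Ss open_contains_ball by blast
  have abx: "aS Ss x < x" "x < bS Ss x"
  proof -
    have "x \<notin> frontier S" using x(3) frontier_subset_S by (auto simp: mem_S)
    then show "aS Ss x < x" "x < bS Ss x" using aS_bS_not_frontier[OF x(1,2)] by auto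
  qed
  define \<delta> where "\<delta> = min (\<epsilon> / 2) (min ((x - aS Ss x) / 2) ((bS Ss x - x) / 2))"
  have d: "\<delta> > 0" "\<delta> < \<epsilon>" "\<delta> < x - aS Ss x" "\<delta> < bS Ss x - x"
    using e abx unfolding \<delta>_def by (auto simp: min_def)
  have in_Ss: "w \<in> Ss" if w: "aS Ss x + s' - \<delta> / 3 \<le> w" "w \<le> bS Ss x + s' + \<delta> / 3" for w
  proof -
    \<comment> \<open>split w = y + (w - y) with y in (aS x, bS x) \<subseteq> S* and w - y in the ball around s'\<close>
    define y where "y = max (aS Ss x + \<delta> / 3) (min (bS Ss x - \<delta> / 3) (w - s'))"
    have y: "aS Ss x < y" "y < bS Ss x" using d unfolding y_def by auto
    have "dist s' (w - y) < \<epsilon>" using d w unfolding y_def by (auto simp: dist_real_def min_def max_def)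
    then have "w - y \<in> Ss" using e by auto
    moreover have "y \<in> Ss"
      using mem_S_iff_between_aS_bS(1)[OF x(1,2) y] x(3) y aS_props(4)[OF x(1)] by (auto simp: mem_S)
    ultimately show ?thesis using Ss_add[of y "w - y"] by simp
  qed
  have "aS Ss (s' + x) \<notin> Ss" "bS Ss (s' + x) \<notin> Ss"
    using aS_props(1)[OF z(1)] bS_props(1)[OF z(2)] frontier_subset_S by (auto simp: mem_S)
  then have "aS Ss (s' + x) < aS Ss x + s' - \<delta> / 3" "bS Ss x + s' + \<delta> / 3 < bS Ss (s' + x)"
    using in_Ss[of "aS Ss (s' + x)"] in_Ss[of "bS Ss (s' + x)"]
      aS_props(2)[OF z(1)] bS_props(2)[OF z(2)] abx d by force+
  then show ?thesis using d unfolding alphaS_def betaS_def by linarith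
qed

end

theorem lemma3:
  fixes Ss :: "real set"
  assumes open_Ss: "open Ss"
    and pos: "Ss \<subseteq> {0<..}"
    and additive: "\<And>u v. u \<in> Ss \<Longrightarrow> v \<in> Ss \<Longrightarrow> u + v \<in> Ss"
    and nonempty: "Ss \<noteq> {}"
  defines "S \<equiv> Sset Ss"
    and "L \<equiv> Sup (Sset Ss)"
  shows "bounded S
    \<and> (\<forall>s\<in>S. alphaS Ss s \<in> S \<and> betaS Ss s \<in> S)
    \<and> (\<forall>s'\<in>Ss. \<forall>x. x \<in> {0..L} \<and> x \<in> interior S \<and> s' + x \<in> {0..L} \<and> s' + x \<in> interior S
          \<longrightarrow> alphaS Ss (s' + x) < alphaS Ss x \<and> betaS Ss (s' + x) < betaS Ss x)
    \<and> (\<forall>s'\<in>Ss. \<forall>x. x \<in> {0..L} \<and> x \<in> Ss \<and> s' + x \<in> {0..L} \<and> s' + x \<in> Ss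
          \<longrightarrow> alphaS Ss (s' + x) > alphaS Ss x \<and> betaS Ss (s' + x) > betaS Ss x)"
proof -
  interpret additive_open_set Ss using assms by unfold_locales auto
  show ?thesis unfolding S_def L_def
    using bounded_S alphaS_betaS_mem_S alphaS_betaS_decrease alphaS_betaS_increase by auto
qed

end
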